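(* Let $0<\alpha<1/4$ and $0<c<1$. For each integer $t\geq 1$ let $a_t$ be a positive integer with $ct^{\alpha}\leq a_t\leq t^{\alpha}$, let $$f_t(X)=X^3+a_t^2(a_t^3-2)X^2-a_t(a_t^3-1)X+1+tX(a_tX-1),$$ let $\theta_t^{(1)}$ be the smallest positive root of $f_t(X)$, and let $\mathcal{O}_t=\mathbf{Z}[\theta_t^{(1)}]$, an order in the totally real cubic field $\mathbf{Q}(\theta_t^{(1)})$. Then for all sufficiently large $t$ (depending only on $\alpha$), the pair $(\theta_t^{(1)},\,a_t\theta_t^{(1)}-1)$ is a system of fundamental units for $\mathcal{O}_t$.
   Context: For integers $t\geq 1$, $a_t\geq 1$, the polynomial $f_t(X)$ has only real roots, two positive and one negative; for $a_t$ large it is irreducible over $\mathbf{Q}$, so $\mathcal{O}_t$ is an order of a totally real cubic field. A system of fundamental units for an order $\mathcal{O}$ of a totally real cubic field is a pair $(\eta_1,\eta_2)$ of units of $\mathcal{O}$ whose images generate the free abelian group $\mathcal{O}^\times/\{\pm1\}$ of rank $2$ (i.e. every unit of $\mathcal{O}$ is $\pm\eta_1^{m}\eta_2^{n}$ with $m,n\in\mathbf{Z}$). *)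

theory Defs
  imports Complex_Main "HOL-Computational_Algebra.Polynomial"
begin

definition f_poly :: "int \<Rightarrow> int \<Rightarrow> int poly" where
  "f_poly t a = monom 1 3 + smult (a^2 * (a^3 - 2)) (monom 1 2)
      - smult (a * (a^3 - 1)) [:0, 1:] + 1 + smult t ([:0, 1:] * [:-1, a:])"

definition smallest_pos_root :: "int poly \<Rightarrow> real" where
  "smallest_pos_root p = Min {x::real. 0 < x \<and> poly (map_poly of_int p) x = 0}"

definition Zadj :: "real \<Rightarrow> real set" where
  "Zadj \<theta> = {poly (map_poly of_int p) \<theta> | p :: int poly. True}"

definition units_of_order :: "real set \<Rightarrow> real set" where
  "units_of_order R = {u \<in> R. u \<noteq> 0 \<and> inverse u \<in> R}"

definition fundamental_units :: "real set \<Rightarrow> real \<Rightarrow> real \<Rightarrow> bool" where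
  "fundamental_units R \<eta>1 \<eta>2 \<longleftrightarrow>
     \<eta>1 \<in> units_of_order R \<and> \<eta>2 \<in> units_of_order R \<and>
     (\<forall>u \<in> units_of_order R. \<exists>(m::int) (n::int) (s::real). (s = 1 \<or> s = -1) \<and>
         u = s * \<eta>1 powi m * \<eta>2 powi n)"

end

theory Submission
  imports Defs
begin

(* Write b = a^4 - 2a + t, so that f_t = X^3 + (1 - aX)(1 - bX).  For b large compared with a its
   roots are theta1 ~ 1/b, theta2 ~ 1/a and theta3 ~ -ab, hence the logarithmic embeddings of the
   units theta and a theta - 1 are known up to O(1).  On the other hand, if a unit e of Z[theta] is
   not +-1, the product of its pairwise conjugate differences is the square root of the
   discriminant times a nonzero integer, so the logarithmic embedding of e has spread at least
   (ln disc - 6 ln 2)/2.  Once t >= 2^20 a^4 the parallelogram spanned by the logarithmic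
   embeddings of theta and a theta - 1 is smaller than that; reducing an arbitrary unit modulo the
   lattice they span therefore leaves +-1. *)

definition cubic :: "real \<Rightarrow> real \<Rightarrow> real \<Rightarrow> real" where
  "cubic B C x = x^3 + B * x^2 - C * x + 1"

definition pbasis :: "real \<Rightarrow> int \<Rightarrow> int \<Rightarrow> int \<Rightarrow> real" where
  "pbasis r p0 p1 p2 = of_int p0 + of_int p1 * r + of_int p2 * r^2"

lemma pbasis_diff:
  "pbasis x p0 p1 p2 - pbasis y p0 p1 p2 = (x - y) * (of_int p1 + of_int p2 * (x + y))"
  unfolding pbasis_def by (simp add: algebra_simps power2_eq_square)

lemma cubic_int_root_coprime:
  fixes n d B C :: int
  assumes eq: "n^3 + B*n^2*d - C*n*d^2 + d^3 = 0" and cop: "coprime n d" and "d > 0"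
  shows "d = 1 \<and> (n = 1 \<or> n = -1)"
proof -
  have "n^3 = d * (C*n*d - B*n^2 - d^2)"
    using eq by (simp add: algebra_simps power2_eq_square power3_eq_cube)
  then have "d dvd n^3" by simp
  moreover have "coprime d (n^3)" using cop by (simp add: coprime_commute)
  ultimately have "is_unit d" using coprime_absorb_left by blast
  with \<open>d > 0\<close> have d1: "d = 1" by simp
  have "n * (n^2 + B*n - C) = -1"
    using eq d1 by (simp add: algebra_simps power2_eq_square power3_eq_cube)
  then have "n dvd 1" by (metis dvd_minus_iff dvd_triv_left)
  then have "\<bar>n\<bar> = 1" by simp
  with d1 show ?thesis by auto
qed

lemma cubic_rational_root:
  fixes B C :: int and x :: real
  assumes "x \<in> \<rat>" and root: "cubic (of_int B) (of_int C) x = 0"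
  shows "x = 1 \<or> x = -1"
proof -
  obtain q where xq: "x = of_rat q" using assms(1) Rats_cases by blast
  obtain n d where nd: "quotient_of q = (n, d)" by (cases "quotient_of q") auto
  have "d > 0" "coprime n d" using nd quotient_of_denom_pos quotient_of_coprime by blast+
  have "q = of_int n / of_int d" using nd quotient_of_div by blast
  then have x: "x = of_int n / of_int d" using xq by (simp add: of_rat_divide)
  have "real_of_int (n^3 + B*n^2*d - C*n*d^2 + d^3) = cubic (of_int B) (of_int C) x * (of_int d)^3"
    using \<open>d > 0\<close> unfolding x cubic_def by (simp add: field_simps power3_eq_cube power2_eq_square)
  also have "\<dots> = 0" using root by simp
  finally have "n^3 + B*n^2*d - C*n*d^2 + d^3 = 0" by (simp only: of_int_eq_0_iff)
  from cubic_int_root_coprime[OF this \<open>coprime n d\<close> \<open>d > 0\<close>] show ?thesis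
    unfolding x by auto
qed

lemma sum_max_pairs_le_abs_diff:
  fixes a b c :: real
  assumes "a + b + c = 0"
  shows "max a b + max a c + max b c \<le> \<bar>a - b\<bar> \<or> max a b + max a c + max b c \<le> \<bar>a - c\<bar>
    \<or> max a b + max a c + max b c \<le> \<bar>b - c\<bar>"
  using assms by (simp add: max_def)

lemma ln_abs_diff_le:
  fixes x y :: real
  assumes "x \<noteq> y" "x \<noteq> 0" "y \<noteq> 0"
  shows "ln \<bar>x - y\<bar> \<le> ln 2 + max (ln \<bar>x\<bar>) (ln \<bar>y\<bar>)"
proof -
  have "\<bar>x - y\<bar> \<le> 2 * max \<bar>x\<bar> \<bar>y\<bar>" by (auto simp: max_def)
  then have "ln \<bar>x - y\<bar> \<le> ln (2 * max \<bar>x\<bar> \<bar>y\<bar>)" using assms by simp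
  also have "\<dots> = ln 2 + max (ln \<bar>x\<bar>) (ln \<bar>y\<bar>)" using assms by (simp add: ln_mult max_def)
  finally show ?thesis .
qed

lemma ln_power2: "ln (x^2) = 2 * ln \<bar>x::real\<bar>"
proof (cases "x = 0")
  case False
  then have "ln (\<bar>x\<bar>^2) = 2 * ln \<bar>x\<bar>" by (subst ln_realpow) auto
  then show ?thesis by simp
qed simp

lemma ln_four: "ln (4::real) = 2 * ln 2"
  using ln_realpow[of 2 2] by simp

lemma abs_comb_le_half:
  fixes x y p q :: real
  assumes "\<bar>x\<bar> \<le> 1/2" "\<bar>y\<bar> \<le> 1/2"
  shows "\<bar>x * p + y * q\<bar> \<le> (\<bar>p\<bar> + \<bar>q\<bar>) / 2"
proof -
  have "\<bar>x * p + y * q\<bar> \<le> \<bar>x\<bar> * \<bar>p\<bar> + \<bar>y\<bar> * \<bar>q\<bar>"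
    using abs_triangle_ineq[of "x*p" "y*q"] by (simp add: abs_mult)
  also have "\<dots> \<le> 1/2 * \<bar>p\<bar> + 1/2 * \<bar>q\<bar>" using assms by (intro add_mono mult_right_mono) auto
  finally show ?thesis by simp
qed

lemma cramer_2x2:
  fixes a1 a2 b1 b2 c1 c2 :: real
  assumes D: "a1 * b2 - a2 * b1 \<noteq> 0"
  obtains x y where "c1 = x * a1 + y * b1" "c2 = x * a2 + y * b2"
proof
  define x where "x = (c1 * b2 - c2 * b1) / (a1 * b2 - a2 * b1)"
  define y where "y = (a1 * c2 - a2 * c1) / (a1 * b2 - a2 * b1)"
  have "x * (a1 * b2 - a2 * b1) = c1 * b2 - c2 * b1" "y * (a1 * b2 - a2 * b1) = a1 * c2 - a2 * c1"
    unfolding x_def y_def using D by simp_all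
  then have "(x * a1 + y * b1) * (a1 * b2 - a2 * b1) = c1 * (a1 * b2 - a2 * b1)"
    "(x * a2 + y * b2) * (a1 * b2 - a2 * b1) = c2 * (a1 * b2 - a2 * b1)"
    by algebra+
  then show "c1 = x * a1 + y * b1" "c2 = x * a2 + y * b2" using D by simp_all
qed

lemma ln_abs_power_int:
  fixes x :: real
  assumes "x \<noteq> 0"
  shows "ln \<bar>x powi k\<bar> = of_int k * ln \<bar>x\<bar>"
proof -
  have "\<bar>x powi k\<bar> = \<bar>x\<bar> powr of_int k" using assms by (simp add: power_int_abs powr_real_of_int')
  then show ?thesis by simp
qed

section \<open>The order generated by a root of a cubic with three real roots\<close>

locale real_cubic_order =
  fixes B C :: int and r1 r2 r3 :: real
  assumes roots: "cubic (of_int B) (of_int C) r1 = 0" "cubic (of_int B) (of_int C) r2 = 0"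
      "cubic (of_int B) (of_int C) r3 = 0"
    and distinct_roots: "r1 \<noteq> r2" "r1 \<noteq> r3" "r2 \<noteq> r3"
    and not_root_one: "cubic (of_int B) (of_int C) 1 \<noteq> 0"
    and not_root_minus_one: "cubic (of_int B) (of_int C) (-1) \<noteq> 0"
begin

abbreviation f :: "real \<Rightarrow> real" where
  "f \<equiv> cubic (of_int B) (of_int C)"

lemma f_cube: "f r = 0 \<Longrightarrow> r^3 = - of_int B * r^2 + of_int C * r - 1"
  unfolding cubic_def by linarith

lemma vieta:
  "r1 + r2 + r3 = - of_int B" "r1*r2 + r1*r3 + r2*r3 = - of_int C" "r1*r2*r3 = -1"
proof -
  have "(r1 - r2) * (r1^2 + r1*r2 + r2^2 + of_int B*(r1+r2) - of_int C) = 0"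
    using roots(1,2) unfolding cubic_def by algebra
  then have h12: "r1^2 + r1*r2 + r2^2 + of_int B*(r1+r2) - of_int C = 0"
    using distinct_roots by simp
  have "(r1 - r3) * (r1^2 + r1*r3 + r3^2 + of_int B*(r1+r3) - of_int C) = 0"
    using roots(1,3) unfolding cubic_def by algebra
  then have h13: "r1^2 + r1*r3 + r3^2 + of_int B*(r1+r3) - of_int C = 0"
    using distinct_roots by simp
  have "(r2 - r3) * (r1 + r2 + r3 + of_int B) = 0" using h12 h13 by algebra
  then show s1: "r1 + r2 + r3 = - of_int B" using distinct_roots by simp
  show s2: "r1*r2 + r1*r3 + r2*r3 = - of_int C" using h12 s1 by algebra
  show "r1*r2*r3 = -1" using roots(1) s1 s2 unfolding cubic_def by algebra
qed

lemma f_factor: "f x = (x - r1) * (x - r2) * (x - r3)"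
  unfolding cubic_def using vieta by algebra

lemma f_eq_0_iff: "f x = 0 \<longleftrightarrow> x = r1 \<or> x = r2 \<or> x = r3"
  unfolding f_factor by auto

lemma root_irrational: "f r = 0 \<Longrightarrow> r \<notin> \<rat>"
  using cubic_rational_root not_root_one not_root_minus_one by blast

lemma poly_eq_pbasis:
  "\<exists>p0 p1 p2. \<forall>r. f r = 0 \<longrightarrow> poly (map_poly of_int P) r = pbasis r p0 p1 p2"
proof (induction P)
  case 0
  show ?case by (intro exI[of _ 0]) (simp add: pbasis_def)
next
  case (pCons c P)
  then obtain q0 q1 q2 where q: "\<And>r. f r = 0 \<Longrightarrow> poly (map_poly of_int P) r = pbasis r q0 q1 q2"
    by blast
  have "poly (map_poly of_int (pCons c P)) r = pbasis r (c - q2) (q0 + C*q2) (q1 - B*q2)"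
    if "f r = 0" for r
  proof -
    have "poly (map_poly of_int (pCons c P)) r = of_int c + r * pbasis r q0 q1 q2"
      using q that by (simp add: map_poly_pCons)
    also have "\<dots> = of_int c + of_int q0 * r + of_int q1 * r^2 + of_int q2 * r^3"
      by (simp add: pbasis_def algebra_simps power2_eq_square power3_eq_cube)
    also have "\<dots> = pbasis r (c - q2) (q0 + C*q2) (q1 - B*q2)"
      unfolding f_cube[OF that] by (simp add: pbasis_def algebra_simps)
    finally show ?thesis .
  qed
  then show ?case by blast
qed

lemma pbasis_eq_0_imp:
  assumes "pbasis r1 p0 p1 p2 = 0"
  shows "p0 = 0 \<and> p1 = 0 \<and> p2 = 0"
proof (cases "p2 = 0")
  case True
  show ?thesis
  proof (cases "p1 = 0")
    case True
    with \<open>p2 = 0\<close> assms show ?thesis by (simp add: pbasis_def)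
  next
    case False
    with \<open>p2 = 0\<close> assms have "r1 = - of_int p0 / of_int p1" by (simp add: pbasis_def field_simps)
    then have "r1 \<in> \<rat>" by simp
    with root_irrational roots(1) show ?thesis by blast
  qed
next
  case False
  define k where "k = (of_int p1 / of_int p2 :: real)"
  define m where "m = (of_int p0 / of_int p2 :: real)"
  have quadratic: "r1^2 = - k * r1 - m"
    using assms False unfolding k_def m_def by (simp add: pbasis_def field_simps)
  \<comment> \<open>Dividing f by X^2 + kX + m leaves a remainder uX + v with rational coefficients.\<close>
  define u where "u = k^2 - m - of_int B * k - of_int C"
  define v where "v = m * (k - of_int B) + 1"
  have division: "f x = (x^2 + k*x + m) * (x + of_int B - k) + u*x + v" for x
    unfolding u_def v_def cubic_def by (simp add: algebra_simps power2_eq_square power3_eq_cube)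
  have remainder: "u * r1 + v = 0" using division[of r1] roots(1) quadratic by simp
  have "k \<in> \<rat>" "u \<in> \<rat>" "v \<in> \<rat>" unfolding k_def m_def u_def v_def by simp_all
  show ?thesis
  proof (cases "u = 0")
    case True
    with remainder have "f (k - of_int B) = 0" unfolding division by simp
    moreover have "k - of_int B \<in> \<rat>" using \<open>k \<in> \<rat>\<close> by simp
    ultimately show ?thesis using root_irrational by blast
  next
    case False
    with remainder have "r1 = - v / u" by (simp add: field_simps)
    then have "r1 \<in> \<rat>" using \<open>u \<in> \<rat>\<close> \<open>v \<in> \<rat>\<close> by simp
    with root_irrational roots(1) show ?thesis by blast
  qed
qed

lemma pbasis_inject:
  "pbasis r1 p0 p1 p2 = pbasis r1 q0 q1 q2 \<longleftrightarrow> p0 = q0 \<and> p1 = q1 \<and> p2 = q2"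
proof
  assume "pbasis r1 p0 p1 p2 = pbasis r1 q0 q1 q2"
  then have "pbasis r1 (p0 - q0) (p1 - q1) (p2 - q2) = 0" by (simp add: pbasis_def algebra_simps)
  from pbasis_eq_0_imp[OF this] show "p0 = q0 \<and> p1 = q1 \<and> p2 = q2" by simp
qed simp

abbreviation Ord :: "real set" where
  "Ord \<equiv> Zadj r1"

abbreviation Units :: "real set" where
  "Units \<equiv> units_of_order Ord"

lemma Ord_iff_pbasis: "x \<in> Ord \<longleftrightarrow> (\<exists>p0 p1 p2. x = pbasis r1 p0 p1 p2)"
proof
  assume "x \<in> Ord"
  then obtain P where "x = poly (map_poly of_int P) r1" unfolding Zadj_def by blast
  with poly_eq_pbasis[of P] roots(1) show "\<exists>p0 p1 p2. x = pbasis r1 p0 p1 p2" by blast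
next
  assume "\<exists>p0 p1 p2. x = pbasis r1 p0 p1 p2"
  then obtain p0 p1 p2 where x: "x = pbasis r1 p0 p1 p2" by blast
  have "x = poly (map_poly of_int [:p0, p1, p2:]) r1"
    unfolding x by (simp add: map_poly_pCons pbasis_def algebra_simps power2_eq_square)
  then show "x \<in> Ord" unfolding Zadj_def by blast
qed

lemma pbasis_in_Ord: "pbasis r1 p0 p1 p2 \<in> Ord"
  using Ord_iff_pbasis by blast

definition coords :: "real \<Rightarrow> int \<times> int \<times> int" where
  "coords x = (SOME (p0, p1, p2). x = pbasis r1 p0 p1 p2)"

text \<open>The embedding of Ord sending r1 to the root r (junk outside Ord); it is well defined
  because 1, r1, r1^2 are linearly independent over the integers (pbasis_inject).\<close>
definition emb :: "real \<Rightarrow> real \<Rightarrow> real" where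
  "emb r x = (case coords x of (p0, p1, p2) \<Rightarrow> pbasis r p0 p1 p2)"

lemma coords_pbasis: "coords (pbasis r1 p0 p1 p2) = (p0, p1, p2)"
proof -
  have "case coords (pbasis r1 p0 p1 p2) of (q0, q1, q2) \<Rightarrow> pbasis r1 p0 p1 p2 = pbasis r1 q0 q1 q2"
    unfolding coords_def by (rule someI_ex) auto
  then show ?thesis using pbasis_inject by (cases "coords (pbasis r1 p0 p1 p2)") auto
qed

lemma emb_pbasis [simp]: "emb r (pbasis r1 p0 p1 p2) = pbasis r p0 p1 p2"
  unfolding emb_def coords_pbasis by simp

lemma one_in_Ord: "1 \<in> Ord" and emb_one: "emb r 1 = 1"
  using pbasis_in_Ord[of 1 0 0] emb_pbasis[of r 1 0 0] by (simp_all add: pbasis_def)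

lemma r1_in_Ord: "r1 \<in> Ord" and emb_r1_self: "emb r r1 = r"
  using pbasis_in_Ord[of 0 1 0] emb_pbasis[of r 0 1 0] by (simp_all add: pbasis_def)

lemma pbasis_mult:
  "\<exists>c0 c1 c2. \<forall>r. f r = 0 \<longrightarrow> pbasis r p0 p1 p2 * pbasis r q0 q1 q2 = pbasis r c0 c1 c2"
proof -
  define c3 where "c3 = p1*q2 + p2*q1"
  define c4 where "c4 = p2*q2"
  have "pbasis r p0 p1 p2 * pbasis r q0 q1 q2
      = pbasis r (p0*q0 - c3 + B*c4) (p0*q1 + p1*q0 + C*c3 - (B*C + 1)*c4)
          (p0*q2 + p1*q1 + p2*q0 - B*c3 + (B^2 + C)*c4)"
    if "f r = 0" for r
    using f_cube[OF that]
    unfolding pbasis_def c3_def c4_def of_int_add of_int_mult of_int_diff of_int_power of_int_1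
    by algebra
  then show ?thesis by blast
qed

lemma Ord_mult_emb:
  assumes "x \<in> Ord" "y \<in> Ord"
  shows "x * y \<in> Ord \<and> (\<forall>r. f r = 0 \<longrightarrow> emb r (x * y) = emb r x * emb r y)"
proof -
  obtain p0 p1 p2 q0 q1 q2 where x: "x = pbasis r1 p0 p1 p2" and y: "y = pbasis r1 q0 q1 q2"
    using assms Ord_iff_pbasis by metis
  obtain c0 c1 c2 where c: "\<And>r. f r = 0 \<Longrightarrow> pbasis r p0 p1 p2 * pbasis r q0 q1 q2 = pbasis r c0 c1 c2"
    using pbasis_mult by blast
  have "x * y = pbasis r1 c0 c1 c2" using c[OF roots(1)] x y by simp
  then show ?thesis using c x y pbasis_in_Ord by simp
qed

lemma Ord_mult: "x \<in> Ord \<Longrightarrow> y \<in> Ord \<Longrightarrow> x * y \<in> Ord"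
  and emb_mult: "x \<in> Ord \<Longrightarrow> y \<in> Ord \<Longrightarrow> f r = 0 \<Longrightarrow> emb r (x * y) = emb r x * emb r y"
  using Ord_mult_emb by blast+

lemma units_emb_inverse:
  assumes "u \<in> Units" "f r = 0"
  shows "emb r u * emb r (inverse u) = 1"
proof -
  have "u \<in> Ord" "inverse u \<in> Ord" "u \<noteq> 0" using assms(1) unfolding units_of_order_def by auto
  then have "emb r (u * inverse u) = emb r u * emb r (inverse u)" using emb_mult assms(2) by blast
  with \<open>u \<noteq> 0\<close> show ?thesis by (simp add: emb_one)
qed

lemma units_emb_nonzero: "u \<in> Units \<Longrightarrow> f r = 0 \<Longrightarrow> emb r u \<noteq> 0"
  using units_emb_inverse by fastforce

lemma emb_inverse: "u \<in> Units \<Longrightarrow> f r = 0 \<Longrightarrow> emb r (inverse u) = inverse (emb r u)"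
  using units_emb_inverse by (metis inverse_unique)

lemma units_mult: "u \<in> Units \<Longrightarrow> v \<in> Units \<Longrightarrow> u * v \<in> Units"
  unfolding units_of_order_def by (auto simp: Ord_mult)

lemma units_inverse: "u \<in> Units \<Longrightarrow> inverse u \<in> Units"
  unfolding units_of_order_def by auto

lemma units_if_mult_unit:
  assumes "x \<in> Ord" "y \<in> Ord" "x * y \<in> Units"
  shows "x \<in> Units"
proof -
  have xy: "x * y \<noteq> 0" "inverse (x * y) \<in> Ord" using assms(3) unfolding units_of_order_def by auto
  then have "x \<noteq> 0" and inv: "inverse x = y * inverse (x * y)" by (simp_all add: inverse_eq_divide)
  moreover have "inverse x \<in> Ord" unfolding inv by (rule Ord_mult[OF assms(2) xy(2)])
  ultimately show ?thesis using assms(1) unfolding units_of_order_def by simp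
qed

lemma units_power_emb:
  assumes "u \<in> Units" "f r = 0"
  shows "u ^ n \<in> Units \<and> emb r (u ^ n) = emb r u ^ n"
proof (induction n)
  case 0
  show ?case using one_in_Ord by (simp add: units_of_order_def emb_one)
next
  case (Suc n)
  have "u \<in> Ord" "u ^ n \<in> Ord" using assms(1) Suc.IH unfolding units_of_order_def by auto
  then show ?case using Suc.IH units_mult[OF assms(1)] emb_mult[OF _ _ assms(2)] by simp
qed

lemma units_power_int_emb:
  assumes "u \<in> Units" "f r = 0"
  shows "u powi k \<in> Units \<and> emb r (u powi k) = emb r u powi k"
proof (cases "k \<ge> 0")
  case True
  then obtain n where "k = int n" by (metis nonneg_eq_int)
  then show ?thesis using units_power_emb[OF assms] by simp
next
  case False
  then obtain n where k: "k = - int n" by (metis neg_int_cases not_le)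
  then have "u powi k = inverse u ^ n" "emb r u powi k = inverse (emb r u) ^ n"
    by (simp_all add: power_int_minus power_inverse)
  then show ?thesis
    using units_power_emb[OF units_inverse[OF assms(1)] assms(2)] emb_inverse[OF assms] by simp
qed

lemma units_power_int: "u \<in> Units \<Longrightarrow> u powi k \<in> Units"
  using units_power_int_emb[OF _ roots(1)] by blast

lemma r1_unit: "r1 \<in> Units"
proof -
  have "r1 * pbasis r1 C (-B) (-1) = 1"
    using roots(1) unfolding pbasis_def cubic_def by (simp add: algebra_simps power2_eq_square power3_eq_cube)
  then have "r1 \<noteq> 0" "inverse r1 = pbasis r1 C (-B) (-1)" by (auto intro: inverse_unique)
  then show ?thesis using r1_in_Ord pbasis_in_Ord unfolding units_of_order_def by auto
qed

text \<open>The norm of p0 + p1 r1 + p2 r1^2, written in the elementary symmetric functions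
  s1 = -B, s2 = -C, s3 = -1 of the roots.\<close>
definition norm_form :: "int \<Rightarrow> int \<Rightarrow> int \<Rightarrow> int" where
  "norm_form p0 p1 p2 = (let s1 = -B; s2 = -C; s3 = -1 in
     p2^3*s3^2 + p1*p2^2*s2*s3 + p0*p2^2*s2^2 + p1^2*p2*s1*s3 - 2*p0*p2^2*s1*s3 + p0*p1*p2*s1*s2
     + p0^2*p2*s1^2 + p1^3*s3 - 3*p0*p1*p2*s3 + p0*p1^2*s2 - 2*p0^2*p2*s2 + p0^2*p1*s1 + p0^3)"

lemma pbasis_norm:
  "pbasis r1 p0 p1 p2 * pbasis r2 p0 p1 p2 * pbasis r3 p0 p1 p2 = of_int (norm_form p0 p1 p2)"
proof -
  have s: "of_int B = - (r1 + r2 + r3)" "of_int C = - (r1*r2 + r1*r3 + r2*r3)" "-1 = r1*r2*r3"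
    using vieta by simp_all
  show ?thesis
    unfolding norm_form_def Let_def pbasis_def of_int_add of_int_mult of_int_diff of_int_power
      of_int_minus of_int_numeral of_int_1 s
    by algebra
qed

lemma units_norm:
  assumes "u \<in> Units"
  shows "\<bar>emb r1 u * emb r2 u * emb r3 u\<bar> = 1"
proof -
  obtain p0 p1 p2 q0 q1 q2 where u: "u = pbasis r1 p0 p1 p2" and v: "inverse u = pbasis r1 q0 q1 q2"
    using assms Ord_iff_pbasis unfolding units_of_order_def by auto
  have "(emb r1 u * emb r2 u * emb r3 u) * (emb r1 (inverse u) * emb r2 (inverse u) * emb r3 (inverse u)) = 1"
    using units_emb_inverse[OF assms] roots by (simp add: algebra_simps)
  then have "of_int (norm_form p0 p1 p2 * norm_form q0 q1 q2) = (1::real)"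
    unfolding v unfolding u by (simp add: pbasis_norm)
  then have "norm_form p0 p1 p2 * norm_form q0 q1 q2 = 1" by linarith
  then have "\<bar>norm_form p0 p1 p2\<bar> = 1" using zdvd1_eq by (metis dvd_triv_left)
  then show ?thesis unfolding u emb_pbasis pbasis_norm by simp
qed

section \<open>Logarithmic embedding of units\<close>

definition Log :: "real \<Rightarrow> real \<Rightarrow> real" where
  "Log r u = ln \<bar>emb r u\<bar>"

lemma Log_sum:
  assumes "u \<in> Units"
  shows "Log r1 u + Log r2 u + Log r3 u = 0"
proof -
  have "Log r1 u + Log r2 u + Log r3 u = ln \<bar>emb r1 u * emb r2 u * emb r3 u\<bar>"
    unfolding Log_def using units_emb_nonzero[OF assms] roots by (simp add: ln_mult abs_mult)
  then show ?thesis using units_norm[OF assms] by simp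
qed

lemma Log_mult:
  assumes "u \<in> Units" "v \<in> Units" "f r = 0"
  shows "Log r (u * v) = Log r u + Log r v"
  using assms units_emb_nonzero[OF _ assms(3)] unfolding Log_def
  by (simp add: emb_mult units_of_order_def abs_mult ln_mult)

lemma Log_power_int:
  assumes "u \<in> Units" "f r = 0"
  shows "Log r (u powi k) = of_int k * Log r u"
  using units_power_int_emb[OF assms] units_emb_nonzero[OF assms] unfolding Log_def
  by (simp add: ln_abs_power_int)

text \<open>Since r_i + r_j = - B - r_k, the product of the three factors p1 + p2 (r_i + r_j) is the
  homogenisation of f evaluated at (p1 - B p2, p2).\<close>
definition pair_form :: "int \<Rightarrow> int \<Rightarrow> int" where
  "pair_form p1 p2 = (p1 - p2*B)^3 + B*(p1 - p2*B)^2*p2 - C*(p1 - p2*B)*p2^2 + p2^3"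

lemma pair_form_eq:
  "(of_int p1 + of_int p2 * (r1 + r2)) * (of_int p1 + of_int p2 * (r1 + r3))
     * (of_int p1 + of_int p2 * (r2 + r3)) = of_int (pair_form p1 p2)"
  unfolding pair_form_def of_int_add of_int_mult of_int_diff of_int_power
  using vieta by algebra

lemma pair_form_nonzero:
  assumes "p1 \<noteq> 0 \<or> p2 \<noteq> 0"
  shows "pair_form p1 p2 \<noteq> 0"
proof -
  have factor_nonzero: "of_int p1 + of_int p2 * (x + y) \<noteq> (0::real)"
    if "x + y + z = - of_int B" "f z = 0" for x y z
  proof
    assume zero: "of_int p1 + of_int p2 * (x + y) = (0::real)"
    show False
    proof (cases "p2 = 0")
      case True
      with zero assms show False by simp
    next
      case False
      have "of_int p2 * (z + of_int B) = (of_int p1 :: real)" using zero that(1) by algebra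
      then have "z = of_int p1 / of_int p2 - of_int B" using False by (simp add: field_simps)
      then have "z \<in> \<rat>" by simp
      with root_irrational that(2) show False by blast
    qed
  qed
  have "r1 + r3 + r2 = - of_int B" "r2 + r3 + r1 = - of_int B" using vieta(1) by linarith+
  then have "real_of_int (pair_form p1 p2) \<noteq> 0"
    unfolding pair_form_eq[symmetric]
    using factor_nonzero[OF vieta(1) roots(3)] factor_nonzero[OF _ roots(2)] factor_nonzero[OF _ roots(1)]
    by simp
  then show ?thesis by simp
qed

lemma unit_coords_nonconst:
  assumes "u \<in> Units" "u \<noteq> 1" "u \<noteq> -1" "u = pbasis r1 p0 p1 p2"
  shows "p1 \<noteq> 0 \<or> p2 \<noteq> 0"
proof (rule ccontr)
  assume "\<not> (p1 \<noteq> 0 \<or> p2 \<noteq> 0)"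
  then have u: "u = of_int p0" "\<And>r. emb r u = of_int p0"
    unfolding assms(4) emb_pbasis by (simp_all add: pbasis_def)
  then have "\<bar>of_int p0 ^ 3\<bar> = (1::real)" using units_norm[OF assms(1)] by (simp add: power3_eq_cube)
  then have "\<bar>p0\<bar> ^ 3 = 1 ^ 3" by (metis of_int_abs of_int_eq_1_iff of_int_power power_abs power_one)
  then have "\<bar>p0\<bar> = 1" using power_eq_imp_eq_base[of "\<bar>p0\<bar>" 3 1] by simp
  with u assms(2,3) show False by (auto simp: abs_if split: if_splits)
qed

definition disc :: real where
  "disc = ((r1 - r2) * (r1 - r3) * (r2 - r3))^2"

lemma conj_diffs_prod_ge:
  assumes "u \<in> Units" "u \<noteq> 1" "u \<noteq> -1"
  shows "\<bar>(r1 - r2) * (r1 - r3) * (r2 - r3)\<bar>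
    \<le> \<bar>(emb r1 u - emb r2 u) * (emb r1 u - emb r3 u) * (emb r2 u - emb r3 u)\<bar>"
proof -
  obtain p0 p1 p2 where u: "u = pbasis r1 p0 p1 p2"
    using assms(1) Ord_iff_pbasis unfolding units_of_order_def by auto
  have "(emb r1 u - emb r2 u) * (emb r1 u - emb r3 u) * (emb r2 u - emb r3 u)
      = (r1 - r2) * (r1 - r3) * (r2 - r3) * of_int (pair_form p1 p2)"
    unfolding u emb_pbasis pbasis_diff pair_form_eq[symmetric] by (simp add: algebra_simps)
  moreover have "1 \<le> \<bar>real_of_int (pair_form p1 p2)\<bar>"
    using pair_form_nonzero[OF unit_coords_nonconst[OF assms u]] by linarith
  then have "\<bar>(r1 - r2) * (r1 - r3) * (r2 - r3)\<bar> * 1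
      \<le> \<bar>(r1 - r2) * (r1 - r3) * (r2 - r3)\<bar> * \<bar>real_of_int (pair_form p1 p2)\<bar>"
    by (intro mult_left_mono) auto
  ultimately show ?thesis by (simp add: abs_mult)
qed

lemma unit_Log_spread:
  assumes "u \<in> Units" "u \<noteq> 1" "u \<noteq> -1"
  shows "\<exists>r r'. f r = 0 \<and> f r' = 0 \<and> ln disc - 6 * ln 2 \<le> 2 * \<bar>Log r u - Log r' u\<bar>"
proof -
  define e1 e2 e3 where "e1 = emb r1 u" and "e2 = emb r2 u" and "e3 = emb r3 u"
  have le: "\<bar>(r1 - r2) * (r1 - r3) * (r2 - r3)\<bar> \<le> \<bar>(e1 - e2) * (e1 - e3) * (e2 - e3)\<bar>"
    unfolding e1_def e2_def e3_def by (rule conj_diffs_prod_ge[OF assms])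
  moreover have pos: "0 < \<bar>(r1 - r2) * (r1 - r3) * (r2 - r3)\<bar>" using distinct_roots by simp
  ultimately have distinct: "e1 \<noteq> e2" "e1 \<noteq> e3" "e2 \<noteq> e3" by auto
  have nonzero: "e1 \<noteq> 0" "e2 \<noteq> 0" "e3 \<noteq> 0"
    unfolding e1_def e2_def e3_def using units_emb_nonzero[OF assms(1)] roots by auto
  have "ln disc = 2 * ln \<bar>(r1 - r2) * (r1 - r3) * (r2 - r3)\<bar>"
    unfolding disc_def by (rule ln_power2)
  also have "\<dots> \<le> 2 * ln \<bar>(e1 - e2) * (e1 - e3) * (e2 - e3)\<bar>"
    using ln_le_cancel_iff[OF pos order.strict_trans2[OF pos le]] le by simp
  also have "\<dots> = 2 * (ln \<bar>e1 - e2\<bar> + ln \<bar>e1 - e3\<bar> + ln \<bar>e2 - e3\<bar>)"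
    using distinct by (simp add: abs_mult ln_mult)
  finally have spread: "ln disc - 6 * ln 2 \<le> 2 * (max (Log r1 u) (Log r2 u)
      + max (Log r1 u) (Log r3 u) + max (Log r2 u) (Log r3 u))"
    using ln_abs_diff_le[OF distinct(1) nonzero(1,2)] ln_abs_diff_le[OF distinct(2) nonzero(1,3)]
      ln_abs_diff_le[OF distinct(3) nonzero(2,3)]
    unfolding Log_def e1_def e2_def e3_def by argo
  with sum_max_pairs_le_abs_diff[OF Log_sum[OF assms(1)]]
  have "ln disc - 6 * ln 2 \<le> 2 * \<bar>Log r1 u - Log r2 u\<bar> \<or> ln disc - 6 * ln 2 \<le> 2 * \<bar>Log r1 u - Log r3 u\<bar>
      \<or> ln disc - 6 * ln 2 \<le> 2 * \<bar>Log r2 u - Log r3 u\<bar>"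
    by argo
  with roots show ?thesis by blast
qed

lemma Log_span:
  assumes units: "\<theta> \<in> Units" "\<eta> \<in> Units" "u \<in> Units"
    and regulator: "Log r1 \<theta> * Log r2 \<eta> - Log r2 \<theta> * Log r1 \<eta> \<noteq> 0"
  obtains x y where "\<And>r. f r = 0 \<Longrightarrow> Log r u = x * Log r \<theta> + y * Log r \<eta>"
proof -
  obtain x y where 1: "Log r1 u = x * Log r1 \<theta> + y * Log r1 \<eta>"
    and 2: "Log r2 u = x * Log r2 \<theta> + y * Log r2 \<eta>"
    using cramer_2x2[OF regulator] by metis
  have 3: "Log r3 u = x * Log r3 \<theta> + y * Log r3 \<eta>"
    using Log_sum[OF units(1)] Log_sum[OF units(2)] Log_sum[OF units(3)] 1 2 by algebra
  show thesis using 1 2 3 f_eq_0_iff by (intro that) auto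
qed

lemma fundamental_units_criterion:
  assumes \<theta>: "\<theta> \<in> Units" and \<eta>: "\<eta> \<in> Units"
    and regulator: "Log r1 \<theta> * Log r2 \<eta> - Log r2 \<theta> * Log r1 \<eta> \<noteq> 0"
    and small: "\<And>r r'. f r = 0 \<Longrightarrow> f r' = 0 \<Longrightarrow>
      \<bar>Log r \<theta> - Log r' \<theta>\<bar> + \<bar>Log r \<eta> - Log r' \<eta>\<bar> < ln disc - 6 * ln 2"
  shows "fundamental_units Ord \<theta> \<eta>"
  unfolding fundamental_units_def
proof (intro conjI \<theta> \<eta> ballI)
  fix u assume u: "u \<in> Units"
  obtain x y where xy: "\<And>r. f r = 0 \<Longrightarrow> Log r u = x * Log r \<theta> + y * Log r \<eta>"
    using Log_span[OF \<theta> \<eta> u regulator] by blast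
  define m n where "m = round x" and "n = round y"
  define \<epsilon> where "\<epsilon> = u * \<theta> powi (-m) * \<eta> powi (-n)"
  have powers: "\<theta> powi (-m) \<in> Units" "\<eta> powi (-n) \<in> Units" using units_power_int \<theta> \<eta> by blast+
  then have \<epsilon>: "\<epsilon> \<in> Units" unfolding \<epsilon>_def using u by (intro units_mult)
  have Log_\<epsilon>: "Log r \<epsilon> = (x - of_int m) * Log r \<theta> + (y - of_int n) * Log r \<eta>" if "f r = 0" for r
    unfolding \<epsilon>_def using that xy[OF that] powers u \<theta> \<eta>
    by (simp add: Log_mult units_mult Log_power_int algebra_simps)
  have "\<epsilon> = 1 \<or> \<epsilon> = -1"
  proof (rule ccontr)
    assume "\<not> (\<epsilon> = 1 \<or> \<epsilon> = -1)"
    then obtain r r' where r: "f r = 0" "f r' = 0"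
      and spread: "ln disc - 6 * ln 2 \<le> 2 * \<bar>Log r \<epsilon> - Log r' \<epsilon>\<bar>"
      using unit_Log_spread[OF \<epsilon>] by blast
    have "Log r \<epsilon> - Log r' \<epsilon>
        = (x - of_int m) * (Log r \<theta> - Log r' \<theta>) + (y - of_int n) * (Log r \<eta> - Log r' \<eta>)"
      using Log_\<epsilon>[OF r(1)] Log_\<epsilon>[OF r(2)] by (simp add: algebra_simps)
    also have "\<bar>\<dots>\<bar> \<le> (\<bar>Log r \<theta> - Log r' \<theta>\<bar> + \<bar>Log r \<eta> - Log r' \<eta>\<bar>) / 2"
      using of_int_round_abs_le[of x] of_int_round_abs_le[of y]
      unfolding m_def n_def by (intro abs_comb_le_half) (simp_all add: abs_minus_commute)
    finally show False using spread small[OF r] by argo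
  qed
  moreover have "u = \<epsilon> * \<theta> powi m * \<eta> powi n"
    using \<theta> \<eta> unfolding \<epsilon>_def units_of_order_def by (simp add: power_int_minus field_simps)
  ultimately show "\<exists>(m::int) (n::int) (s::real). (s = 1 \<or> s = -1) \<and> u = s * \<theta> powi m * \<eta> powi n"
    by blast
qed

lemma Min_positive_roots:
  assumes "0 < r1" "r1 < r2" "r3 < 0"
  shows "Min {x. 0 < x \<and> f x = 0} = r1"
proof -
  have "{x. 0 < x \<and> f x = 0} = {r1, r2}" unfolding f_eq_0_iff using assms by auto
  then show ?thesis using assms by simp
qed

end

section \<open>The roots of f_t\<close>

lemma poly_f_poly:
  "poly (map_poly of_int (f_poly t a)) x
     = cubic (of_int (a * (a^4 - 2*a + t))) (of_int (a + (a^4 - 2*a + t))) x"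
proof -
  have "f_poly t a = [:1, -(a^4 - a + t), a*(a^4 - 2*a + t), 1:]"
    unfolding f_poly_def
    by (simp add: eval_nat_numeral monom_Suc monom_0 one_pCons algebra_simps smult_add_right
        power2_eq_square power3_eq_cube flip: pCons_one)
  then show ?thesis by (simp add: cubic_def map_poly_pCons algebra_simps power2_eq_square power3_eq_cube)
qed

lemma cubic_factored: "cubic (a * b) (a + b) x = x^3 + (1 - a*x) * (1 - b*x)"
  unfolding cubic_def by (simp add: algebra_simps power2_eq_square)

lemma cubic_root_between:
  assumes "lo < hi" and sign_change: "cubic B C lo * cubic B C hi < 0"
  obtains r where "lo < r" "r < hi" "cubic B C r = 0"
proof -
  have cont: "continuous_on {lo..hi} (cubic B C)" unfolding cubic_def by (intro continuous_intros)
  have "\<exists>r. lo \<le> r \<and> r \<le> hi \<and> cubic B C r = 0"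
  proof (cases "cubic B C lo < 0")
    case True
    then have "cubic B C hi > 0" using sign_change by (simp add: mult_less_0_iff)
    then show ?thesis using IVT'[of "cubic B C" lo 0 hi, OF _ _ _ cont] True assms(1) by simp
  next
    case False
    then have "cubic B C lo > 0" "cubic B C hi < 0" using sign_change by (auto simp: mult_less_0_iff)
    then show ?thesis using IVT2'[of "cubic B C" hi 0 lo, OF _ _ _ cont] assms(1) by simp
  qed
  moreover have "cubic B C lo \<noteq> 0" "cubic B C hi \<noteq> 0" using sign_change by auto
  ultimately show thesis using that by (metis order_le_less)
qed

lemma cubic_small_root:
  fixes a b :: real
  assumes "1 \<le> a" "8 * a \<le> b"
  obtains r where "1/b < r" "r < 2/b" "cubic (a*b) (a+b) r = 0"
proof -
  have "b \<ge> 8" using assms by linarith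
  then have "8/b^3 \<le> 1/64" "2*a/b \<le> 1/4"
    using assms power_mono[of 8 b 3] by (simp_all add: divide_simps)
  moreover have "cubic (a*b) (a+b) (2/b) = 8/b^3 - 1 + 2*a/b" "cubic (a*b) (a+b) (1/b) = 1/b^3"
    unfolding cubic_factored using \<open>b \<ge> 8\<close> by (simp_all add: field_simps power3_eq_cube)
  ultimately have "cubic (a*b) (a+b) (2/b) < 0" "cubic (a*b) (a+b) (1/b) > 0"
    using \<open>b \<ge> 8\<close> by (linarith, simp)
  then have "cubic (a*b) (a+b) (1/b) * cubic (a*b) (a+b) (2/b) < 0" by (simp add: mult_pos_neg)
  moreover have "1/b < 2/b" using assms by (simp add: divide_strict_right_mono)
  ultimately show thesis using cubic_root_between that by blast
qed

lemma cubic_middle_root: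
  fixes a b :: real
  assumes "1 \<le> a" "8 * a \<le> b"
  obtains r where "1/(2*a) < r" "r < 1/a" "cubic (a*b) (a+b) r = 0"
proof -
  have "1/(8*a^3) \<le> 1/8" "b/(4*a) \<ge> 2"
    using assms by (simp_all add: divide_simps)
  moreover have "cubic (a*b) (a+b) (1/(2*a)) = 1/(8*a^3) + 1/2 - b/(4*a)"
    "cubic (a*b) (a+b) (1/a) = 1/a^3"
    unfolding cubic_factored using assms by (simp_all add: field_simps power3_eq_cube)
  ultimately have "cubic (a*b) (a+b) (1/(2*a)) < 0" "cubic (a*b) (a+b) (1/a) > 0"
    using assms by (linarith, simp)
  then have "cubic (a*b) (a+b) (1/(2*a)) * cubic (a*b) (a+b) (1/a) < 0" by (simp add: mult_neg_pos)
  moreover have "1/(2*a) < 1/a" using assms by (simp add: divide_simps)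
  ultimately show thesis using cubic_root_between that by blast
qed

lemma cubic_negative_root:
  fixes a b :: real
  assumes "1 \<le> a" "8 * a \<le> b"
  obtains r where "- (a*b) - 2 < r" "r < - (a*b)" "cubic (a*b) (a+b) r = 0"
proof -
  have "a \<le> a * b" "b \<le> a * b" using assms by (simp_all add: mult_le_cancel_left1 mult_le_cancel_right1)
  then have "(a*b + 2) * ((a + b) - 2*(a*b) - 4) \<le> (a*b + 2) * (-4)"
    using assms by (intro mult_left_mono) linarith+
  moreover have "(a*b + 2) * (-4) = -4 * (a*b) - 8" by simp
  moreover have "cubic (a*b) (a+b) (- (a*b) - 2) = (a*b + 2) * ((a + b) - 2*(a*b) - 4) + 1"
    "cubic (a*b) (a+b) (- (a*b)) = (a + b) * (a*b) + 1"
    unfolding cubic_def by (simp_all add: algebra_simps power2_eq_square power3_eq_cube)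
  moreover have "0 < (a + b) * (a*b)" using assms by simp
  ultimately have "cubic (a*b) (a+b) (- (a*b) - 2) < 0" "cubic (a*b) (a+b) (- (a*b)) > 0"
    using \<open>a \<le> a * b\<close> assms by linarith+
  then have "cubic (a*b) (a+b) (- (a*b) - 2) * cubic (a*b) (a+b) (- (a*b)) < 0"
    by (simp add: mult_neg_pos)
  moreover have "- (a*b) - 2 < - (a*b)" by simp
  ultimately show thesis using cubic_root_between that by blast
qed

lemma small_root_logs:
  fixes a b r :: real
  assumes "1 \<le> a" "8 * a \<le> b" "1/b < r" "r < 2/b"
  shows "- ln b < ln \<bar>r\<bar>" "ln \<bar>r\<bar> < ln 2 - ln b"
    "- ln 2 < ln \<bar>a*r - 1\<bar>" "ln \<bar>a*r - 1\<bar> < 0"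
proof -
  have "b > 0" "r > 0" using assms by (auto intro: less_trans[of 0 "1/b"])
  then show "- ln b < ln \<bar>r\<bar>" "ln \<bar>r\<bar> < ln 2 - ln b"
    using assms(3,4) ln_less_cancel_iff[of "1/b" r] ln_less_cancel_iff[of r "2/b"] by (simp_all add: ln_div)
  have "a * r < a * (2/b)" using assms by (intro mult_strict_left_mono) auto
  also have "a * (2/b) \<le> 1/4" using assms \<open>b > 0\<close> by (simp add: divide_simps)
  finally have "\<bar>a*r - 1\<bar> = 1 - a*r" "1/2 < 1 - a*r" "1 - a*r < 1"
    using assms \<open>r > 0\<close> by auto
  then show "- ln 2 < ln \<bar>a*r - 1\<bar>" "ln \<bar>a*r - 1\<bar> < 0"
    using ln_less_cancel_iff[of "1/2" "1 - a*r"] by (simp_all add: ln_div)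
qed

lemma middle_root_defect:
  fixes a b r :: real
  assumes "1 \<le> a" "8 * a \<le> b" "1/(2*a) < r" "r < 1/a" "cubic (a*b) (a+b) r = 0"
  shows "1/8 < \<bar>a*r - 1\<bar> * a^2 * b" "\<bar>a*r - 1\<bar> * a^2 * b < 4"
proof -
  define \<rho> where "\<rho> = a * r"
  have \<rho>: "1/2 < \<rho>" "\<rho> < 1" unfolding \<rho>_def using assms by (simp_all add: field_simps)
  define s where "s = \<bar>a*r - 1\<bar>"
  have s: "s = 1 - \<rho>" "s > 0" unfolding s_def \<rho>_def using \<rho> unfolding \<rho>_def by auto
  have eq: "(s * a^2) * (b * \<rho> - a) = \<rho>^3"
  proof -
    have "a^3 * cubic (a*b) (a+b) r = 0" using assms(5) by simp
    then show ?thesis unfolding s(1) \<rho>_def cubic_def by (simp add: algebra_simps power2_eq_square power3_eq_cube)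
  qed
  have pos: "s * a^2 > 0" using s assms by simp
  have "b * (1/2) < b * \<rho>" "b * \<rho> < b * 1" using \<rho> assms by (intro mult_strict_left_mono; simp)+
  then have "b / 4 < b * \<rho> - a" "b * \<rho> - a < b" using assms by linarith+
  moreover have "1/8 < \<rho>^3" "\<rho>^3 < 1"
    using \<rho> power_strict_mono[of "1/2" \<rho> 3] by (simp_all add: power_less_one_iff power_divide)
  ultimately have "(s * a^2) * (b/4) < 1" "1/8 < (s * a^2) * b"
    using eq mult_strict_left_mono[OF _ pos, of "b/4" "b * \<rho> - a"]
      mult_strict_left_mono[OF _ pos, of "b * \<rho> - a" b] by linarith+
  then show "1/8 < \<bar>a*r - 1\<bar> * a^2 * b" "\<bar>a*r - 1\<bar> * a^2 * b < 4" unfolding s_def by simp_all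
qed

lemma middle_root_logs:
  fixes a b r :: real
  assumes "1 \<le> a" "8 * a \<le> b" "1/(2*a) < r" "r < 1/a" "cubic (a*b) (a+b) r = 0"
  shows "- ln 2 - ln a < ln \<bar>r\<bar>" "ln \<bar>r\<bar> < - ln a"
    "- 3 * ln 2 - 2 * ln a - ln b < ln \<bar>a*r - 1\<bar>" "ln \<bar>a*r - 1\<bar> < 2 * ln 2 - 2 * ln a - ln b"
proof -
  have "a > 0" "b > 0" "r > 0" using assms by (auto intro: less_trans[of 0 "1/(2*a)"])
  then show "- ln 2 - ln a < ln \<bar>r\<bar>" "ln \<bar>r\<bar> < - ln a"
    using assms(3,4) ln_less_cancel_iff[of "1/(2*a)" r] ln_less_cancel_iff[of r "1/a"]
    by (simp_all add: ln_div ln_mult)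
  have "\<bar>a*r - 1\<bar> \<noteq> 0" using middle_root_defect(1)[OF assms] by auto
  then have "\<bar>a*r - 1\<bar> > 0" by simp
  moreover have "ln (\<bar>a*r - 1\<bar> * a^2 * b) = ln \<bar>a*r - 1\<bar> + 2 * ln a + ln b"
    using calculation \<open>a > 0\<close> \<open>b > 0\<close> by (simp add: ln_mult ln_realpow)
  moreover have "ln (1/8::real) = - 3 * ln 2" "ln (4::real) = 2 * ln 2"
    using ln_realpow[of 2 3] ln_four by (simp_all add: ln_div)
  ultimately show "- 3 * ln 2 - 2 * ln a - ln b < ln \<bar>a*r - 1\<bar>"
    "ln \<bar>a*r - 1\<bar> < 2 * ln 2 - 2 * ln a - ln b"
    using middle_root_defect[OF assms] \<open>a > 0\<close> \<open>b > 0\<close>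
      ln_less_cancel_iff[of "1/8" "\<bar>a*r - 1\<bar> * a^2 * b"] ln_less_cancel_iff[of "\<bar>a*r - 1\<bar> * a^2 * b" 4]
    by simp_all
qed

lemma negative_root_logs:
  fixes a b r :: real
  assumes "1 \<le> a" "8 * a \<le> b" "- (a*b) - 2 < r" "r < - (a*b)"
  shows "ln a + ln b < ln \<bar>r\<bar>" "ln \<bar>r\<bar> < ln 2 + ln a + ln b"
    "2 * ln a + ln b < ln \<bar>a*r - 1\<bar>" "ln \<bar>a*r - 1\<bar> < 2 * ln 2 + 2 * ln a + ln b"
proof -
  have "a > 0" "b > 0" "a*b \<ge> 8" using assms mult_mono[of 1 a 8 b] by auto
  then have "r < 0" "a * r < 0" using assms by (auto simp: mult_pos_neg)
  then have abs_r: "\<bar>r\<bar> = - r" and abs_ar: "\<bar>a*r - 1\<bar> = 1 + a * \<bar>r\<bar>" by simp_all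
  have r: "a*b < \<bar>r\<bar>" "\<bar>r\<bar> < a*b + 2" "\<bar>r\<bar> < 2 * (a*b)"
    using assms \<open>a*b \<ge> 8\<close> unfolding abs_r by linarith+
  moreover have "ln (a*b) = ln a + ln b" "ln (2*(a*b)) = ln 2 + ln a + ln b"
    using \<open>a > 0\<close> \<open>b > 0\<close> by (simp_all add: ln_mult)
  ultimately show "ln a + ln b < ln \<bar>r\<bar>" "ln \<bar>r\<bar> < ln 2 + ln a + ln b"
    using \<open>a > 0\<close> \<open>b > 0\<close> ln_less_cancel_iff[of "a*b" "\<bar>r\<bar>"] ln_less_cancel_iff[of "\<bar>r\<bar>" "2*(a*b)"]
    by auto
  have lower: "a * (a*b) < a * \<bar>r\<bar>" and upper: "a * \<bar>r\<bar> < a * (a*b + 2)"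
    using mult_strict_left_mono[OF _ \<open>a > 0\<close>] r by blast+
  have "8 * a \<le> a * (a*b)" using \<open>a*b \<ge> 8\<close> \<open>a > 0\<close> by simp
  moreover have "a * (a*b + 2) = 2 * a + a * (a*b)" by (simp add: algebra_simps)
  ultimately have "1 + a * \<bar>r\<bar> < 4 * (a * (a*b))" using assms upper by linarith
  with lower have "a^2 * b < \<bar>a*r - 1\<bar>" "\<bar>a*r - 1\<bar> < 4 * a^2 * b"
    unfolding abs_ar by (simp_all add: power2_eq_square algebra_simps)
  then have "ln (a^2 * b) < ln \<bar>a*r - 1\<bar>" "ln \<bar>a*r - 1\<bar> < ln (4 * a^2 * b)"
    using \<open>a > 0\<close> \<open>b > 0\<close> by simp_all
  moreover have "ln (a^2 * b) = 2 * ln a + ln b" "ln (4 * a^2 * b) = 2 * ln 2 + 2 * ln a + ln b"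
    using \<open>a > 0\<close> \<open>b > 0\<close> by (simp_all add: ln_mult ln_realpow ln_four)
  ultimately show "2 * ln a + ln b < ln \<bar>a*r - 1\<bar>" "ln \<bar>a*r - 1\<bar> < 2 * ln 2 + 2 * ln a + ln b"
    by linarith+
qed

lemma roots_ln_disc:
  fixes a b r1 r2 r3 :: real
  assumes "1 \<le> a" "8 * a \<le> b" "1/b < r1" "r1 < 2/b" "1/(2*a) < r2" "r2 < 1/a"
    "- (a*b) - 2 < r3" "r3 < - (a*b)"
  shows "2 * ln a + 4 * ln b - 4 * ln 2 < ln (((r1 - r2) * (r1 - r3) * (r2 - r3))^2)"
proof -
  have "a > 0" "b > 0" using assms by auto
  have "2/b \<le> 1/(4*a)" using assms \<open>a > 0\<close> \<open>b > 0\<close> by (simp add: divide_simps)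
  moreover have "1/(2*a) = 2 * (1/(4*a))" "0 < 1/(4*a)" using \<open>a > 0\<close> by simp_all
  ultimately have d12: "1/(4*a) < \<bar>r1 - r2\<bar>" "0 < \<bar>r1 - r2\<bar>" using assms by linarith+
  have d13: "a*b < \<bar>r1 - r3\<bar>" and d23: "a*b < \<bar>r2 - r3\<bar>"
    using assms \<open>b > 0\<close> less_trans[of 0 "1/b" r1] less_trans[of 0 "1/(2*a)" r2] by auto
  have "0 \<le> a*b" using \<open>a > 0\<close> \<open>b > 0\<close> by simp
  then have "1/(4*a) * (a*b) < \<bar>r1 - r2\<bar> * \<bar>r1 - r3\<bar>" using mult_strict_mono[OF d12(1) d13 d12(2)] by blast
  moreover have "0 < 1/(4*a) * (a*b)" using \<open>a > 0\<close> \<open>b > 0\<close> by simp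
  ultimately have "1/(4*a) * (a*b) * (a*b) < \<bar>r1 - r2\<bar> * \<bar>r1 - r3\<bar> * \<bar>r2 - r3\<bar>"
    using mult_strict_mono[OF _ d23] \<open>0 \<le> a*b\<close> by force
  moreover have "a * b^2 / 2^2 = 1/(4*a) * (a*b) * (a*b)" using \<open>a > 0\<close> by (simp add: power2_eq_square)
  ultimately have "a * b^2 / 2^2 < \<bar>(r1 - r2) * (r1 - r3) * (r2 - r3)\<bar>" by (simp only: abs_mult)
  moreover have "0 < a * b^2 / 2^2" using \<open>a > 0\<close> \<open>b > 0\<close> by simp
  ultimately have "ln (a * b^2 / 2^2) < ln \<bar>(r1 - r2) * (r1 - r3) * (r2 - r3)\<bar>"
    using ln_less_cancel_iff by (meson order.strict_trans)
  moreover have "ln (a * b^2 / 2^2) = ln a + 2 * ln b - 2 * ln 2"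
    using \<open>a > 0\<close> \<open>b > 0\<close> by (simp add: ln_realpow ln_mult ln_div ln_four)
  ultimately show ?thesis unfolding ln_power2 by linarith
qed

lemma regulator_conditions:
  fixes a b r1 r2 r3 :: real
  assumes a: "1 \<le> a" and b: "2^18 * a^4 \<le> b" and root2: "cubic (a*b) (a+b) r2 = 0"
    and r1: "1/b < r1" "r1 < 2/b" and r2: "1/(2*a) < r2" "r2 < 1/a"
    and r3: "- (a*b) - 2 < r3" "r3 < - (a*b)"
  defines "v x \<equiv> ln \<bar>x\<bar>" and "w x \<equiv> ln \<bar>a*x - 1\<bar>"
  shows "v r1 * w r2 - v r2 * w r1 \<noteq> 0"
    and "\<forall>x\<in>{r1, r2, r3}. \<forall>y\<in>{r1, r2, r3}.
      \<bar>v x - v y\<bar> + \<bar>w x - w y\<bar> < ln (((r1 - r2) * (r1 - r3) * (r2 - r3))^2) - 6 * ln 2"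
proof -
  have "a \<le> a^4" using power_increasing[of 1 4 a] a by simp
  then have b8a: "8 * a \<le> b" using a b by simp
  have "ln (2^18 * a^4) \<le> ln b" using a b by (intro ln_mono) simp_all
  moreover have "ln (262144::real) = 18 * ln 2" using ln_realpow[of 2 18] by simp
  ultimately have lnb: "4 * ln a + 18 * ln 2 \<le> ln b" using a by (simp add: ln_mult ln_realpow)
  have "0 \<le> ln a" "0 < ln (2::real)" using a by simp_all
  note logs = small_root_logs[OF a b8a r1] middle_root_logs[OF a b8a r2 root2]
    negative_root_logs[OF a b8a r3] roots_ln_disc[OF a b8a r1 r2 r3]
  note bounds = logs[folded v_def w_def] lnb \<open>0 \<le> ln a\<close> \<open>0 < ln 2\<close>
  have "\<bar>v r1 - v r2\<bar> < ln b - ln a" "\<bar>w r1 - w r2\<bar> < 3 * ln 2 + 2 * ln a + ln b"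
    "\<bar>v r1 - v r3\<bar> < 2 * ln b + ln a + ln 2" "\<bar>w r1 - w r3\<bar> < 3 * ln 2 + 2 * ln a + ln b"
    "\<bar>v r2 - v r3\<bar> < 2 * ln a + ln b + 2 * ln 2" "\<bar>w r2 - w r3\<bar> < 4 * ln a + 2 * ln b + 5 * ln 2"
    unfolding abs_less_iff using bounds by linarith+
  then show "\<forall>x\<in>{r1, r2, r3}. \<forall>y\<in>{r1, r2, r3}.
      \<bar>v x - v y\<bar> + \<bar>w x - w y\<bar> < ln (((r1 - r2) * (r1 - r3) * (r2 - r3))^2) - 6 * ln 2"
    using bounds by (auto simp: abs_minus_commute)
  have "(ln 2 + ln a) * ln 2 < (ln b - 2 * ln 2) * (ln b - ln 2)"
    by (rule mult_strict_mono) (use bounds in linarith)+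
  also have "\<dots> < (- w r2) * (- v r1)"
    by (rule mult_strict_mono) (use bounds in linarith)+
  finally have "(ln 2 + ln a) * ln 2 < v r1 * w r2" by (simp add: mult.commute)
  moreover have "(- v r2) * (- w r1) \<le> (ln 2 + ln a) * ln 2"
    by (rule mult_mono) (use bounds in linarith)+
  ultimately show "v r1 * w r2 - v r2 * w r1 \<noteq> 0" by simp
qed

lemma f_poly_cubic_order:
  fixes a b :: int
  assumes a: "1 \<le> a" and b: "8 * a \<le> b"
  obtains r1 r2 r3 where "real_cubic_order (a*b) (a+b) r1 r2 r3" "0 < r1" "r1 < r2" "r3 < 0"
    "1 / of_int b < r1" "r1 < 2 / of_int b" "1 / (2 * of_int a) < r2" "r2 < 1 / of_int a"
    "- (of_int a * of_int b) - 2 < r3" "r3 < - (of_int a * of_int b)"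
proof -
  have a': "1 \<le> real_of_int a" and b': "8 * real_of_int a \<le> of_int b" using a b by simp_all
  let ?g = "cubic (of_int a * of_int b) (of_int a + of_int b)"
  obtain r1 r2 r3 where r1: "1 / of_int b < r1" "r1 < 2 / of_int b" "?g r1 = 0"
    and r2: "1 / (2 * of_int a) < r2" "r2 < 1 / of_int a" "?g r2 = 0"
    and r3: "- (of_int a * of_int b) - 2 < r3" "r3 < - (of_int a * of_int b)" "?g r3 = 0"
    using cubic_small_root[OF a' b'] cubic_middle_root[OF a' b'] cubic_negative_root[OF a' b'] by metis
  have "2 / real_of_int b \<le> 1 / (2 * of_int a)" "0 < 1 / real_of_int b" "0 < real_of_int a * of_int b"
    using a' b' by (simp_all add: divide_simps)
  then have order: "0 < r1" "r1 < r2" "r3 < 0" using r1 r2 r3 by linarith+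
  then have "r1 \<noteq> r2" "r1 \<noteq> r3" "r2 \<noteq> r3" by auto
  moreover have "cubic (of_int (a*b)) (of_int (a+b)) 1 \<noteq> 0" "cubic (of_int (a*b)) (of_int (a+b)) (-1) \<noteq> 0"
  proof -
    have "0 \<le> (real_of_int a - 1) * (of_int b - 1)" using a' b' by simp
    then have "0 < cubic (of_int (a*b)) (of_int (a+b)) 1" "0 < cubic (of_int (a*b)) (of_int (a+b)) (-1)"
      using a' b' unfolding cubic_def by (simp_all add: algebra_simps)
    then show "cubic (of_int (a*b)) (of_int (a+b)) 1 \<noteq> 0" "cubic (of_int (a*b)) (of_int (a+b)) (-1) \<noteq> 0"
      by simp_all
  qed
  ultimately have "real_cubic_order (a*b) (a+b) r1 r2 r3"
    using r1(3) r2(3) r3(3) by unfold_locales simp_all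
  with order r1 r2 r3 show thesis using that by blast
qed

lemma f_poly_fundamental_units:
  fixes a t :: int
  assumes a: "1 \<le> a" and t: "2^20 * real_of_int a ^ 4 \<le> real_of_int t"
  defines "\<theta> \<equiv> smallest_pos_root (f_poly t a)"
  shows "fundamental_units (Zadj \<theta>) \<theta> (of_int a * \<theta> - 1)"
proof -
  define b where "b = a^4 - 2*a + t"
  have a': "1 \<le> real_of_int a" using a by simp
  have a4: "real_of_int a \<le> of_int a ^ 4" using power_increasing[of 1 4 "real_of_int a"] a' by simp
  have "real_of_int b = of_int a ^ 4 - 2 * of_int a + of_int t" unfolding b_def by simp
  moreover have pow: "(2::real)^20 = 1048576" "(2::real)^18 = 262144" by simp_all
  ultimately have b: "2^18 * real_of_int a ^ 4 \<le> of_int b" using a' a4 t unfolding pow by linarith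
  then have "real_of_int (8 * a) \<le> of_int b" using a4 a' unfolding pow by linarith
  then have "8 * a \<le> b" by (simp only: of_int_le_iff)
  then obtain r1 r2 r3 where "real_cubic_order (a*b) (a+b) r1 r2 r3" "0 < r1" "r1 < r2" "r3 < 0"
    and r1: "1 / of_int b < r1" "r1 < 2 / of_int b" and r2: "1 / (2 * of_int a) < r2" "r2 < 1 / of_int a"
    and r3: "- (of_int a * of_int b) - 2 < r3" "r3 < - (of_int a * of_int b)"
    using f_poly_cubic_order a by blast
  interpret K: real_cubic_order "a*b" "a+b" r1 r2 r3 by fact
  from \<open>0 < r1\<close> \<open>r1 < r2\<close> \<open>r3 < 0\<close> have \<theta>_eq: "\<theta> = r1"
    unfolding \<theta>_def smallest_pos_root_def poly_f_poly b_def[symmetric] by (rule K.Min_positive_roots)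
  have "(of_int a * r1 - 1) * pbasis r1 1 (-b) 0 = r1 powi 3"
    using K.roots(1) unfolding pbasis_def cubic_def by (simp add: algebra_simps power2_eq_square power3_eq_cube)
  moreover have "of_int a * r1 - 1 = pbasis r1 (-1) a 0" by (simp add: pbasis_def)
  ultimately have \<eta>: "of_int a * r1 - 1 \<in> K.Units"
    using K.units_if_mult_unit K.pbasis_in_Ord K.units_power_int[OF K.r1_unit] by metis
  have Log: "K.Log r r1 = ln \<bar>r\<bar>" "K.Log r (of_int a * r1 - 1) = ln \<bar>of_int a * r - 1\<bar>" for r
    unfolding K.Log_def K.emb_r1_self \<open>of_int a * r1 - 1 = pbasis r1 (-1) a 0\<close> K.emb_pbasis
    by (simp_all add: pbasis_def)
  have "fundamental_units K.Ord r1 (of_int a * r1 - 1)"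
  proof (rule K.fundamental_units_criterion[OF K.r1_unit \<eta>])
    have "cubic (of_int a * of_int b) (of_int a + of_int b) r2 = 0" using K.roots(2) by simp
    note conditions = regulator_conditions[OF a' b this r1 r2 r3, folded Log K.disc_def]
    show "K.Log r1 r1 * K.Log r2 (of_int a * r1 - 1) - K.Log r2 r1 * K.Log r1 (of_int a * r1 - 1) \<noteq> 0"
      using conditions(1) .
    show "\<bar>K.Log r r1 - K.Log r' r1\<bar> + \<bar>K.Log r (of_int a * r1 - 1) - K.Log r' (of_int a * r1 - 1)\<bar>
        < ln K.disc - 6 * ln 2" if "K.f r = 0" "K.f r' = 0" for r r'
      using conditions(2) that unfolding K.f_eq_0_iff by blast
  qed
  then show ?thesis unfolding \<theta>_eq .
qed

lemma fourth_power_le_of_le_powr: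
  fixes \<alpha> K x y :: real
  assumes "0 < \<alpha>" "\<alpha> < 1/4" "0 < K" "1 \<le> x" "K powr (1 / (1 - 4*\<alpha>)) \<le> x"
    and "0 \<le> y" "y \<le> x powr \<alpha>"
  shows "K * y^4 \<le> x"
proof -
  have "K = (K powr (1 / (1 - 4*\<alpha>))) powr (1 - 4*\<alpha>)" using assms by (simp add: powr_powr)
  also have "\<dots> \<le> x powr (1 - 4*\<alpha>)" using assms by (intro powr_mono2) auto
  finally have K: "K \<le> x powr (1 - 4*\<alpha>)" .
  have "y^4 \<le> (x powr \<alpha>)^4" using assms by (intro power_mono) auto
  also have "\<dots> = x powr (4*\<alpha>)" using assms by (simp add: powr_power mult.commute)
  finally have "K * y^4 \<le> x powr (1 - 4*\<alpha>) * x powr (4*\<alpha>)" using K assms by (intro mult_mono) auto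
  also have "\<dots> = x" using assms by (simp flip: powr_add)
  finally show ?thesis .
qed

theorem mainTheorem4:
  fixes \<alpha> c :: real
  assumes "0 < \<alpha>" "\<alpha> < 1/4" "0 < c" "c < 1"
  shows "\<exists>T::int. \<forall>(t::int) (a::int).
           t \<ge> T \<and> t \<ge> 1 \<and> a \<ge> 1 \<and> c * real_of_int t powr \<alpha> \<le> real_of_int a
             \<and> real_of_int a \<le> real_of_int t powr \<alpha> \<longrightarrow>
           (let \<theta> = smallest_pos_root (f_poly t a) in
              fundamental_units (Zadj \<theta>) \<theta> (real_of_int a * \<theta> - 1))"
proof -
  define T where "T = \<lceil>(2^20::real) powr (1 / (1 - 4*\<alpha>))\<rceil>"
  have "2^20 * real_of_int a ^ 4 \<le> real_of_int t"
    if "T \<le> t" "1 \<le> t" "1 \<le> a" "real_of_int a \<le> real_of_int t powr \<alpha>" for t a :: int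
    using fourth_power_le_of_le_powr[OF assms(1,2), of "2^20" "real_of_int t" "real_of_int a"] that
    unfolding T_def by (simp add: ceiling_le_iff)
  then show ?thesis
    unfolding Let_def by (intro exI[of _ T]) (auto intro: f_poly_fundamental_units)
qed

end
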